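(* In the EnSolver setting described in the context (ensemble of $M$ base models, output domain of size $N_{\mathcal{S}}$, threshold $\tau$ with $M(1-\tau)$ a positive integer, and assumptions of independence and (A1)–(A3)), the skip rate of the EnSolver $m$ satisfies $$p\left( m(x) = s_{\text{skip}} \right) > \alpha \sum_{i=0}^{k-1}\binom{M}{i}\beta_{\text{min}}^i (1-\beta_{\text{max}})^{M-i} + (1-\alpha) - \frac{N_{\mathcal{S}}-\alpha}{N_{\mathcal{S}}-1}\, \mathcal{E}(M, N_{\mathcal{S}}, \tau),$$ where $k = M(1-\tau) + 1$ and $x \sim p$.
   Context: Setting: $\mathcal{S}$ is a finite set of output strings with $N_{\mathcal{S}} = |\mathcal{S}| \ge 2$; inputs $x \in \mathcal{X}$ are drawn from a probability distribution $p$ on $\mathcal{X}$, each $x$ having a single correct output $s_x \in \mathcal{S}$. $\mathcal{X}$ is the disjoint union of the in-distribution set $\mathcal{X}^{\text{in}}$ and the out-of-distribution set $\mathcal{X}^{\text{out}}$, and $\alpha = p(x \in \mathcal{X}^{\text{in}})$. An ensemble consists of $M$ base models $m_1, \dots, m_M$, each of which produces a (random) prediction $m_i(x) \in \mathcal{S}$ on input $x$; probabilities are taken jointly over $x \sim p$ and the predictions, and the base models make their predictions independently of each other given the input (in particular conditionally on $x \in \mathcal{X}^{\text{in}}$ and conditionally on $x \in \mathcal{X}^{\text{out}}$). Let $\beta_i = p(m_i(x) = s_x \mid x \in \mathcal{X}^{\text{in}})$, $\beta_{\text{min}} = \min_i \beta_i$, $\beta_{\text{max}} = \max_i \beta_i$.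 Assumptions: (A1) $\beta_{\text{min}} > 1/N_{\mathcal{S}}$; (A2) for each $i$, conditionally on $x \in \mathcal{X}^{\text{in}}$, $m_i(x)$ equals each incorrect string $s \neq s_x$ with probability $(1-\beta_i)/(N_{\mathcal{S}}-1)$; (A3) for each $i$, conditionally on $x \in \mathcal{X}^{\text{out}}$, $m_i(x)$ equals each $s \in \mathcal{S}$ with probability $1/N_{\mathcal{S}}$. For $x$ and $s \in \mathcal{S}$, $n(x,s)$ is the number of base models with $m_i(x) = s$. The threshold $\tau \in (0,1]$ is such that $M(1-\tau)$ is a positive integer. The EnSolver $m$ acts as follows on input $x$: let $p_{\max} = \max_{s} n(x,s)/M$ and uncertainty $u = 1 - p_{\max}$; if $u < \tau$ it outputs a string $y$ maximizing $n(x,\cdot)$, otherwise it outputs a special skip symbol $s_{\text{skip}}$. The out-of-distribution error bound is $\mathcal{E}(M, N_{\mathcal{S}}, \tau) = \binom{M}{\lfloor M/2 \rfloor} (N_{\mathcal{S}})^{-M(1-\tau)}$. *)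

theory Defs
  imports "HOL-Probability.Probability"
begin

text \<open>Given the input x, model i predicts according to the pmf mdl i x, and the
  models predict independently of each other given the input (product pmf).\<close>
definition joint :: "'x pmf \<Rightarrow> (nat \<Rightarrow> 'x \<Rightarrow> 's pmf) \<Rightarrow> nat \<Rightarrow> ('x \<times> (nat \<Rightarrow> 's)) pmf" where
  "joint p mdl M =
     bind_pmf p (\<lambda>x. map_pmf (\<lambda>\<omega>. (x, \<omega>)) (Pi_pmf {..<M} undefined (\<lambda>i. mdl i x)))"

definition cnt :: "nat \<Rightarrow> (nat \<Rightarrow> 's) \<Rightarrow> 's \<Rightarrow> nat" where
  "cnt M \<omega> s = card {i. i < M \<and> \<omega> i = s}"

definition pmax :: "'s set \<Rightarrow> nat \<Rightarrow> (nat \<Rightarrow> 's) \<Rightarrow> real" where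
  "pmax S M \<omega> = Max ((\<lambda>s. real (cnt M \<omega> s) / real M) ` S)"

text \<open>EnSolver output: Some y (a majority string) or None (= the skip symbol).\<close>
definition ensolver :: "'s set \<Rightarrow> nat \<Rightarrow> real \<Rightarrow> (nat \<Rightarrow> 's) \<Rightarrow> 's option" where
  "ensolver S M \<tau> \<omega> =
     (if 1 - pmax S M \<omega> < \<tau>
      then Some (SOME y. y \<in> S \<and> (\<forall>s\<in>S. cnt M \<omega> s \<le> cnt M \<omega> y))
      else None)"

definition beta :: "'x pmf \<Rightarrow> (nat \<Rightarrow> 'x \<Rightarrow> 's pmf) \<Rightarrow> nat \<Rightarrow> 'x set \<Rightarrow> ('x \<Rightarrow> 's) \<Rightarrow> nat \<Rightarrow> real" where
  "beta p mdl M Xin sx i =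
     measure_pmf.prob (joint p mdl M) {z. fst z \<in> Xin \<and> snd z i = sx (fst z)}
     / measure_pmf.prob (joint p mdl M) {z. fst z \<in> Xin}"

definition err_bound :: "nat \<Rightarrow> nat \<Rightarrow> real \<Rightarrow> real" where
  "err_bound M N \<tau> = real (M choose (M div 2)) * real N powr (- (real M * (1 - \<tau>)))"

end

theory Submission
  imports Defs
begin

text \<open>The EnSolver skips exactly when every string gets at most \<open>K = M(1-\<tau>)\<close> votes.
  On an in-distribution input, splitting according to the exact set of models voting for
  the correct string shows that it gets at most \<open>K\<close> votes with probability at least the
  binomial sum; by (A1) and (A2) each wrong string is predicted with probability below
  \<open>1/N\<close>, so a union over \<open>(K+1)\<close>-sets of models bounds the probability that it gets more
  than \<open>K\<close> votes by \<open>C(M,K+1) N^-(K+1)\<close>. On an out-of-distribution input every string is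
  in the latter situation. A union bound, averaging over \<open>x\<close> and
  \<open>C(M,K+1) \<le> C(M,\<lfloor>M/2\<rfloor>)\<close> give the bound.\<close>

lemma measure_pmf_prob_bind_pmf:
  "measure_pmf.prob (bind_pmf p f) A = measure_pmf.expectation p (\<lambda>x. measure_pmf.prob (f x) A)"
  unfolding measure_pmf_bind
  by (rule measure_pmf.measure_bind[where N="count_space UNIV"])
     (auto simp: measurable_pmf_measure1 measure_pmf_in_subprob_algebra)

lemma prob_bind_pmf_ge_cases:
  fixes a b :: real
  assumes "\<And>x. x \<in> set_pmf p \<Longrightarrow> x \<in> X \<Longrightarrow> a \<le> measure_pmf.prob (f x) A"
    and "\<And>x. x \<in> set_pmf p \<Longrightarrow> x \<notin> X \<Longrightarrow> b \<le> measure_pmf.prob (f x) A"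
  shows "measure_pmf.prob p X * a + (1 - measure_pmf.prob p X) * b \<le> measure_pmf.prob (bind_pmf p f) A"
proof -
  have "measure_pmf.prob p X * a + (1 - measure_pmf.prob p X) * b = b + (a - b) * measure_pmf.prob p X"
    by (simp add: algebra_simps)
  also have "\<dots> = measure_pmf.expectation p (\<lambda>x. b + (a - b) * indicator X x)"
    by (subst Bochner_Integration.integral_add)
       (auto simp: measure_pmf.prob_space intro: measure_pmf.integrable_const_bound[where B=1])
  also have "\<dots> \<le> measure_pmf.expectation p (\<lambda>x. measure_pmf.prob (f x) A)"
    using assms
    by (intro integral_mono_AE AE_pmfI measure_pmf.integrable_const_bound[where B="\<bar>a\<bar> + \<bar>b\<bar>"]
          measure_pmf.integrable_const_bound[where B=1]) (auto simp: indicator_def)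
  finally show ?thesis by (simp add: measure_pmf_prob_bind_pmf)
qed

lemma prob_Ball_ge:
  fixes Q :: "'a pmf" and P :: "'s \<Rightarrow> 'a \<Rightarrow> bool"
  assumes "finite S" "R \<subseteq> S"
  shows "measure_pmf.prob Q {\<omega>. \<forall>s\<in>R. P s \<omega>} - (\<Sum>s\<in>S - R. measure_pmf.prob Q {\<omega>. \<not> P s \<omega>})
    \<le> measure_pmf.prob Q {\<omega>. \<forall>s\<in>S. P s \<omega>}"
proof -
  let ?U = "\<Union>s\<in>S - R. {\<omega>. \<not> P s \<omega>}"
  have "{\<omega>. \<forall>s\<in>R. P s \<omega>} \<subseteq> {\<omega>. \<forall>s\<in>S. P s \<omega>} \<union> ?U" by auto
  then have "measure_pmf.prob Q {\<omega>. \<forall>s\<in>R. P s \<omega>} \<le> measure_pmf.prob Q ({\<omega>. \<forall>s\<in>S. P s \<omega>} \<union> ?U)"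
    by (rule measure_pmf.finite_measure_mono) simp
  also have "\<dots> \<le> measure_pmf.prob Q {\<omega>. \<forall>s\<in>S. P s \<omega>} + measure_pmf.prob Q ?U"
    by (rule measure_Un_le) simp_all
  also have "measure_pmf.prob Q ?U \<le> (\<Sum>s\<in>S - R. measure_pmf.prob Q {\<omega>. \<not> P s \<omega>})"
    by (rule measure_pmf.finite_measure_subadditive_finite) (use assms in auto)
  finally show ?thesis by simp
qed

lemma prob_cnt_ge_upper:
  fixes P :: "nat \<Rightarrow> 's pmf"
  assumes "\<And>i. i < M \<Longrightarrow> pmf (P i) s \<le> q"
  shows "measure_pmf.prob (Pi_pmf {..<M} d P) {\<omega>. k \<le> cnt M \<omega> s} \<le> real (M choose k) * q ^ k"
proof -
  let ?Q = "Pi_pmf {..<M} d P"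
  define F where "F = {T. T \<subseteq> {..<M} \<and> card T = k}"
  define E where "E T = Pi {..<M} (\<lambda>i. if i \<in> T then {s} else UNIV)" for T
  have "{\<omega>. k \<le> cnt M \<omega> s} \<subseteq> (\<Union>T\<in>F. E T)"
  proof
    fix \<omega> assume "\<omega> \<in> {\<omega>. k \<le> cnt M \<omega> s}"
    then have "k \<le> card {i. i < M \<and> \<omega> i = s}" by (simp add: cnt_def)
    then obtain T where "T \<subseteq> {i. i < M \<and> \<omega> i = s}" "card T = k"
      by (rule obtain_subset_with_card_n)
    then have "T \<in> F" "\<omega> \<in> E T" unfolding F_def E_def by auto
    then show "\<omega> \<in> (\<Union>T\<in>F. E T)" by blast
  qed
  then have "measure_pmf.prob ?Q {\<omega>. k \<le> cnt M \<omega> s} \<le> measure_pmf.prob ?Q (\<Union>T\<in>F. E T)"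
    by (rule measure_pmf.finite_measure_mono) simp
  also have "\<dots> \<le> (\<Sum>T\<in>F. measure_pmf.prob ?Q (E T))"
    by (rule measure_pmf.finite_measure_subadditive_finite) (auto simp: F_def)
  also have "\<dots> \<le> (\<Sum>T\<in>F. q ^ k)"
  proof (rule sum_mono)
    fix T assume T: "T \<in> F"
    have "measure_pmf.prob ?Q (E T) = (\<Prod>i<M. measure_pmf.prob (P i) (if i \<in> T then {s} else UNIV))"
      unfolding E_def by (rule measure_Pi_pmf_Pi) simp
    also have "\<dots> = (\<Prod>i<M. if i \<in> T then pmf (P i) s else 1)"
      by (intro prod.cong) (auto simp: measure_pmf_single)
    also have "\<dots> = (\<Prod>i\<in>{..<M} \<inter> T. pmf (P i) s)"
      by (simp add: prod.inter_restrict)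
    also have "\<dots> \<le> (\<Prod>i\<in>{..<M} \<inter> T. q)"
      using assms by (intro prod_mono) auto
    also have "\<dots> = q ^ k"
      using T by (simp add: F_def Int_absorb1)
    finally show "measure_pmf.prob ?Q (E T) \<le> q ^ k" .
  qed
  also have "\<dots> = real (M choose k) * q ^ k"
    using n_subsets[of "{..<M}" k] by (simp add: F_def)
  finally show ?thesis .
qed

lemma prob_cnt_le_lower:
  fixes P :: "nat \<Rightarrow> 's pmf"
  assumes lo: "\<And>i. i < M \<Longrightarrow> bmin \<le> pmf (P i) s" and hi: "\<And>i. i < M \<Longrightarrow> pmf (P i) s \<le> bmax"
    and "0 \<le> bmin" "bmax \<le> 1"
  shows "(\<Sum>j<K+1. real (M choose j) * bmin ^ j * (1 - bmax) ^ (M - j))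
    \<le> measure_pmf.prob (Pi_pmf {..<M} d P) {\<omega>. cnt M \<omega> s \<le> K}"
proof -
  let ?Q = "Pi_pmf {..<M} d P"
  define F where "F = {T. T \<subseteq> {..<M} \<and> card T \<le> K}"
  define E where "E T = Pi {..<M} (\<lambda>i. if i \<in> T then {s} else -{s})" for T
  have votes_iff: "\<omega> i = s \<longleftrightarrow> i \<in> T" if "\<omega> \<in> E T" "i < M" for \<omega> T i
  proof -
    have "\<omega> i \<in> (if i \<in> T then {s} else -{s})"
      using that(1) unfolding E_def by (rule Pi_mem) (simp add: that(2))
    then show ?thesis by (cases "i \<in> T") auto
  qed
  have voters: "{i. i < M \<and> \<omega> i = s} = T" if "\<omega> \<in> E T" "T \<subseteq> {..<M}" for \<omega> T
    using that votes_iff[OF that(1)] by auto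
  have prob_E: "bmin ^ card T * (1 - bmax) ^ (M - card T) \<le> measure_pmf.prob ?Q (E T)"
    if T: "T \<subseteq> {..<M}" for T
  proof -
    have "bmin ^ card T * (1 - bmax) ^ (M - card T) = (\<Prod>i\<in>T. bmin) * (\<Prod>i\<in>{..<M} - T. 1 - bmax)"
      using T by (simp add: card_Diff_subset finite_subset)
    also have "\<dots> \<le> (\<Prod>i\<in>T. pmf (P i) s) * (\<Prod>i\<in>{..<M} - T. 1 - pmf (P i) s)"
      using T lo hi \<open>0 \<le> bmin\<close> \<open>bmax \<le> 1\<close>
      by (intro mult_mono prod_mono prod_nonneg) (auto simp: subset_iff)
    also have "\<dots> = (\<Prod>i<M. if i \<in> T then pmf (P i) s else 1 - pmf (P i) s)"
      using T by (simp add: prod.If_cases Int_absorb1 Diff_eq)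
    also have "\<dots> = (\<Prod>i<M. measure_pmf.prob (P i) (if i \<in> T then {s} else -{s}))"
      by (intro prod.cong)
         (auto simp: measure_pmf_single measure_pmf.prob_compl[of "{s}", simplified] Compl_eq_Diff_UNIV)
    also have "\<dots> = measure_pmf.prob ?Q (E T)"
      unfolding E_def by (rule measure_Pi_pmf_Pi[symmetric]) simp
    finally show ?thesis .
  qed
  have "(\<Sum>j<K+1. real (M choose j) * bmin ^ j * (1 - bmax) ^ (M - j))
      = (\<Sum>j<K+1. \<Sum>T\<in>{T\<in>F. card T = j}. bmin ^ card T * (1 - bmax) ^ (M - card T))"
  proof (rule sum.cong[OF refl])
    fix j assume "j \<in> {..<K+1}"
    then have "{T\<in>F. card T = j} = {T. T \<subseteq> {..<M} \<and> card T = j}" by (auto simp: F_def)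
    then show "real (M choose j) * bmin ^ j * (1 - bmax) ^ (M - j)
        = (\<Sum>T\<in>{T\<in>F. card T = j}. bmin ^ card T * (1 - bmax) ^ (M - card T))"
      using n_subsets[of "{..<M}" j] by simp
  qed
  also have "\<dots> = (\<Sum>T\<in>F. bmin ^ card T * (1 - bmax) ^ (M - card T))"
    by (rule sum.group) (auto simp: F_def)
  also have "\<dots> \<le> (\<Sum>T\<in>F. measure_pmf.prob ?Q (E T))"
    by (rule sum_mono) (simp add: prob_E F_def)
  also have "\<dots> = measure_pmf.prob ?Q (\<Union>T\<in>F. E T)"
  proof (rule measure_pmf.finite_measure_finite_Union[symmetric])
    show "disjoint_family_on E F"
      unfolding disjoint_family_on_def F_def using voters by blast
  qed (auto simp: F_def)
  also have "\<dots> \<le> measure_pmf.prob ?Q {\<omega>. cnt M \<omega> s \<le> K}"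
    by (rule measure_pmf.finite_measure_mono) (auto simp: F_def cnt_def voters)
  finally show ?thesis .
qed

lemma sum_prob_cnt_gt_le:
  fixes P :: "nat \<Rightarrow> 's pmf"
  assumes "\<And>i s. i < M \<Longrightarrow> s \<in> R \<Longrightarrow> pmf (P i) s \<le> q"
  shows "(\<Sum>s\<in>R. measure_pmf.prob (Pi_pmf {..<M} d P) {\<omega>. \<not> cnt M \<omega> s \<le> K})
    \<le> real (card R) * real (M choose (K+1)) * q ^ (K+1)"
proof -
  have "(\<Sum>s\<in>R. measure_pmf.prob (Pi_pmf {..<M} d P) {\<omega>. K+1 \<le> cnt M \<omega> s})
      \<le> (\<Sum>s\<in>R. real (M choose (K+1)) * q ^ (K+1))"
    using assms by (intro sum_mono prob_cnt_ge_upper) simp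
  then show ?thesis
    by (simp add: not_le Suc_le_eq mult.assoc)
qed

lemma prob_all_cnt_le_lower:
  fixes P :: "nat \<Rightarrow> 's pmf"
  assumes "finite S" "s0 \<in> S"
    and "\<And>i. i < M \<Longrightarrow> bmin \<le> pmf (P i) s0" "\<And>i. i < M \<Longrightarrow> pmf (P i) s0 \<le> bmax"
    and "0 \<le> bmin" "bmax \<le> 1"
    and "\<And>i s. i < M \<Longrightarrow> s \<in> S - {s0} \<Longrightarrow> pmf (P i) s \<le> q"
  shows "(\<Sum>j<K+1. real (M choose j) * bmin ^ j * (1 - bmax) ^ (M - j))
      - real (card S - 1) * real (M choose (K+1)) * q ^ (K+1)
    \<le> measure_pmf.prob (Pi_pmf {..<M} d P) {\<omega>. \<forall>s\<in>S. cnt M \<omega> s \<le> K}"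
  using prob_Ball_ge[of S "{s0}" "Pi_pmf {..<M} d P" "\<lambda>s \<omega>. cnt M \<omega> s \<le> K"]
    prob_cnt_le_lower[of M bmin P s0 bmax K d] sum_prob_cnt_gt_le[of M "S - {s0}" P q d K] assms
  by simp

lemma prob_all_cnt_le_uniform:
  fixes P :: "nat \<Rightarrow> 's pmf"
  assumes "finite S" "\<And>i s. i < M \<Longrightarrow> s \<in> S \<Longrightarrow> pmf (P i) s \<le> q"
  shows "1 - real (card S) * real (M choose (K+1)) * q ^ (K+1)
    \<le> measure_pmf.prob (Pi_pmf {..<M} d P) {\<omega>. \<forall>s\<in>S. cnt M \<omega> s \<le> K}"
  using prob_Ball_ge[of S "{}" "Pi_pmf {..<M} d P" "\<lambda>s \<omega>. cnt M \<omega> s \<le> K"]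
    sum_prob_cnt_gt_le[of M S P q d K] assms
  by (simp add: measure_pmf.prob_space)

lemma pmf_eq_of_uniform_errors:
  assumes "finite S" "set_pmf P \<subseteq> S" "s0 \<in> S" "card S \<ge> 2"
    and "\<And>s. s \<in> S \<Longrightarrow> s \<noteq> s0 \<Longrightarrow> pmf P s = (1 - b) / (real (card S) - 1)"
  shows "pmf P s0 = b"
proof -
  have "1 = (\<Sum>s\<in>S. pmf P s)"
    using sum_pmf_eq_1[OF assms(1,2)] by simp
  also have "\<dots> = pmf P s0 + (\<Sum>s\<in>S - {s0}. (1 - b) / (real (card S) - 1))"
    using assms by (simp add: sum.remove)
  also have "\<dots> = pmf P s0 + (1 - b)"
    using assms by (simp add: of_nat_diff)
  finally show ?thesis by simp
qed

lemma prob_all_cnt_le_in_distribution: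
  fixes P :: "nat \<Rightarrow> 's pmf" and S :: "'s set" and b :: "nat \<Rightarrow> real" and M K :: nat
  defines "N \<equiv> card S" and "bmin \<equiv> Min (b ` {..<M})" and "bmax \<equiv> Max (b ` {..<M})"
  assumes "finite S" "N \<ge> 2" "s0 \<in> S" "M > 0"
    and supp: "\<And>i. i < M \<Longrightarrow> set_pmf (P i) \<subseteq> S"
    and errors: "\<And>i s. i < M \<Longrightarrow> s \<in> S \<Longrightarrow> s \<noteq> s0 \<Longrightarrow> pmf (P i) s = (1 - b i) / (real N - 1)"
    and bmin: "bmin > 1 / real N"
  shows "(\<Sum>j<K+1. real (M choose j) * bmin ^ j * (1 - bmax) ^ (M - j))
      - (real N - 1) * real (M choose (K+1)) * (1 / real N) ^ (K+1)
    \<le> measure_pmf.prob (Pi_pmf {..<M} d P) {\<omega>. \<forall>s\<in>S. cnt M \<omega> s \<le> K}"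
proof -
  have N: "real N \<ge> 2" using \<open>N \<ge> 2\<close> by simp
  have correct: "pmf (P i) s0 = b i" if "i < M" for i
    using pmf_eq_of_uniform_errors[OF \<open>finite S\<close> supp[OF that] \<open>s0 \<in> S\<close>] errors[OF that] \<open>N \<ge> 2\<close>
    by (simp add: N_def)
  have bmin_le: "bmin \<le> b i" and le_bmax: "b i \<le> bmax" if "i < M" for i
    using that by (auto simp: bmin_def bmax_def)
  have "bmax \<in> b ` {..<M}"
    unfolding bmax_def using \<open>M > 0\<close> by (intro Max_in) auto
  then obtain i where "i < M" "bmax = pmf (P i) s0"
    using correct by auto
  then have "bmax \<le> 1"
    by (simp add: pmf_le_1)
  have "0 < 1 / real N"
    using N by simp
  then have "0 \<le> bmin"
    using bmin by linarith
  have wrong: "pmf (P i) s \<le> 1 / real N" if "i < M" "s \<in> S - {s0}" for i s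
  proof -
    have "1 < real N * bmin"
      using bmin N by (simp add: field_simps)
    also have "\<dots> \<le> real N * b i"
      using bmin_le[OF that(1)] by (simp add: mult_left_mono)
    finally have "(1 - b i) / (real N - 1) \<le> 1 / real N"
      using N by (simp add: field_simps)
    then show ?thesis
      using errors[of i s] that by simp
  qed
  show ?thesis
    using prob_all_cnt_le_lower[of S s0 M bmin P bmax "1 / real N" K d] \<open>finite S\<close> \<open>s0 \<in> S\<close>
      bmin_le le_bmax correct \<open>0 \<le> bmin\<close> \<open>bmax \<le> 1\<close> wrong \<open>N \<ge> 2\<close>
    by (simp add: N_def of_nat_diff)
qed

lemma ensolver_eq_None_iff:
  assumes "finite S" "S \<noteq> {}" "M > 0" "real K = real M * (1 - \<tau>)"
  shows "ensolver S M \<tau> \<omega> = None \<longleftrightarrow> (\<forall>s\<in>S. cnt M \<omega> s \<le> K)"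
proof -
  have "ensolver S M \<tau> \<omega> = None \<longleftrightarrow> pmax S M \<omega> \<le> 1 - \<tau>"
    by (auto simp: ensolver_def)
  also have "1 - \<tau> = real K / real M"
    using assms(3,4) by (simp add: field_simps)
  also have "pmax S M \<omega> \<le> real K / real M
      \<longleftrightarrow> (\<forall>s\<in>S. real (cnt M \<omega> s) / real M \<le> real K / real M)"
    unfolding pmax_def using assms(1,2) by simp
  also have "\<dots> \<longleftrightarrow> (\<forall>s\<in>S. cnt M \<omega> s \<le> K)"
    using assms(3) by (simp add: divide_le_cancel)
  finally show ?thesis .
qed

lemma err_bound_gt:
  assumes "real K = real M * (1 - \<tau>)" "N \<ge> 2"
  shows "(real N - 1) * real (M choose (K+1)) * (1 / real N) ^ (K+1) < err_bound M N \<tau>"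
proof -
  have "(real N - 1) * real (M choose (K+1)) \<le> (real N - 1) * real (M choose (M div 2))"
    using binomial_maximum[of M "K+1"] assms(2) by (intro mult_left_mono) auto
  also have "\<dots> < real N * real (M choose (M div 2))"
    by (simp add: algebra_simps)
  finally have "(real N - 1) * real (M choose (K+1)) < real N * real (M choose (M div 2))" .
  then have "(real N - 1) * real (M choose (K+1)) * (1 / real N) ^ (K+1)
      < real N * real (M choose (M div 2)) * (1 / real N) ^ (K+1)"
    using assms(2) by (intro mult_strict_right_mono) auto
  also have "\<dots> = err_bound M N \<tau>"
    using assms by (simp add: err_bound_def powr_minus powr_realpow field_simps flip: assms(1))
  finally show ?thesis .
qed

theorem lemma4:
  fixes p :: "'x pmf" and Xin :: "'x set" and sx :: "'x \<Rightarrow> 's"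
    and S :: "'s set" and mdl :: "nat \<Rightarrow> 'x \<Rightarrow> 's pmf"
    and M K :: nat and \<tau> :: real
  defines "N \<equiv> card S"
      and "\<alpha> \<equiv> measure_pmf.prob p Xin"
      and "\<beta> \<equiv> beta p mdl M Xin sx"
  defines "\<beta>min \<equiv> Min (\<beta> ` {..<M})"
      and "\<beta>max \<equiv> Max (\<beta> ` {..<M})"
  assumes finS: "finite S" and N2: "N \<ge> 2"
    and sx_S: "\<And>x. sx x \<in> S"
    and pred_S: "\<And>i x. i < M \<Longrightarrow> set_pmf (mdl i x) \<subseteq> S"
    and tau: "0 < \<tau>" "\<tau> \<le> 1"
    and K: "K > 0" "real K = real M * (1 - \<tau>)"
    and A1: "\<beta>min > 1 / real N"
    and A2: "\<And>i x s. i < M \<Longrightarrow> x \<in> set_pmf p \<Longrightarrow> x \<in> Xin \<Longrightarrow> s \<in> S \<Longrightarrow> s \<noteq> sx x \<Longrightarrow>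
               pmf (mdl i x) s = (1 - \<beta> i) / (real N - 1)"
    and A3: "\<And>i x s. i < M \<Longrightarrow> x \<in> set_pmf p \<Longrightarrow> x \<notin> Xin \<Longrightarrow> s \<in> S \<Longrightarrow>
               pmf (mdl i x) s = 1 / real N"
  shows "measure_pmf.prob (joint p mdl M) {z. ensolver S M \<tau> (snd z) = None}
     > \<alpha> * (\<Sum>i\<in>{..<K+1}. real (M choose i) * \<beta>min ^ i * (1 - \<beta>max) ^ (M - i))
       + (1 - \<alpha>) - (real N - \<alpha>) / (real N - 1) * err_bound M N \<tau>"
proof -
  let ?Sum = "\<Sum>i\<in>{..<K+1}. real (M choose i) * \<beta>min ^ i * (1 - \<beta>max) ^ (M - i)"
  let ?Skip = "{\<omega>. \<forall>s\<in>S. cnt M \<omega> s \<le> K}"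
  define E where "E = real (M choose (K+1)) * (1 / real N) ^ (K+1)"
  have "M > 0" using K by (cases M) auto
  have "S \<noteq> {}" using N2 by (auto simp: N_def)
  have skip: "{z. ensolver S M \<tau> (snd z) = None} = snd -` ?Skip"
    using ensolver_eq_None_iff[OF finS \<open>S \<noteq> {}\<close> \<open>M > 0\<close> K(2)] by auto
  have in_bound: "?Sum - (real N - 1) * E
      \<le> measure_pmf.prob (Pi_pmf {..<M} undefined (\<lambda>i. mdl i x)) ?Skip"
    if "x \<in> set_pmf p" "x \<in> Xin" for x
    using prob_all_cnt_le_in_distribution[of S "sx x" M "\<lambda>i. mdl i x" \<beta>] finS N2 sx_S pred_S
      \<open>M > 0\<close> A1 A2 that unfolding E_def \<beta>min_def \<beta>max_def N_def by (simp add: mult.assoc)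
  have out_bound: "1 - real N * E \<le> measure_pmf.prob (Pi_pmf {..<M} undefined (\<lambda>i. mdl i x)) ?Skip"
    if "x \<in> set_pmf p" "x \<notin> Xin" for x
    using prob_all_cnt_le_uniform[of S M "\<lambda>i. mdl i x" "1 / real N" K undefined] finS A3 that
    unfolding E_def N_def by (simp add: mult.assoc)
  have "\<alpha> * (?Sum - (real N - 1) * E) + (1 - \<alpha>) * (1 - real N * E)
      \<le> measure_pmf.prob (joint p mdl M) (snd -` ?Skip)"
    unfolding joint_def \<alpha>_def using in_bound out_bound
    by (intro prob_bind_pmf_ge_cases) (simp_all add: vimage_def)
  moreover have "(real N - \<alpha>) * E < (real N - \<alpha>) / (real N - 1) * err_bound M N \<tau>"
  proof -
    have "(real N - \<alpha>) / (real N - 1) * ((real N - 1) * E)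
        < (real N - \<alpha>) / (real N - 1) * err_bound M N \<tau>"
      using err_bound_gt[OF K(2) N2] N2 measure_pmf.prob_le_1[of p Xin, folded \<alpha>_def]
      by (intro mult_strict_left_mono divide_pos_pos) (simp_all add: E_def mult.assoc)
    then show ?thesis
      using N2 by simp
  qed
  ultimately show ?thesis
    unfolding skip by (simp add: algebra_simps)
qed

end
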